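(* Let $p$ be a prime, $\theta\in\mathbb F_p^*$, and $B_1,B_2\subset\mathbb F_p$. Then $$\left|\sum_{b_1\in B_1,\,b_2\in B_2}e_p\left(\theta(b_1-b_2)^2\right)\right|\le|B_1|^{1/2}E(B_1,B_1)^{1/8}|B_2|^{1/2}E(B_2,B_2)^{1/8}p^{1/8}.$$
   Context: $e_p(x)=e^{2\pi ix/p}$ for $x\in\mathbb F_p$; $\mathbb F_p^*=\mathbb F_p\setminus\{0\}$. $E(B,B)$ is the number of solutions of $b_1+b_2=b_3+b_4$ with all $b_i\in B$. *)

theory Defs
  imports "HOL-Analysis.Analysis" "HOL-Number_Theory.Number_Theory"
begin

text \<open>Elements of F_p are represented by integers in {0..<p}; e_p(x) = exp(2 pi i x / p),
  which depends only on x mod p.\<close>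
definition ep :: "nat \<Rightarrow> int \<Rightarrow> complex" where
  "ep p x = exp (2 * of_real pi * \<i> * of_int x / of_nat p)"

definition addE :: "nat \<Rightarrow> int set \<Rightarrow> nat" where
  "addE p B = card {(b1, b2, b3, b4). b1 \<in> B \<and> b2 \<in> B \<and> b3 \<in> B \<and> b4 \<in> B \<and>
                     [b1 + b2 = b3 + b4] (mod int p)}"

end

theory Submission
  imports Defs
begin

text \<open>
  For odd p expand theta (x - y)^2 = theta x^2 + theta y^2 + c x y with c = -2 theta, which is
  nonzero modulo p. The sum becomes a bilinear form in e_p(c x y) with unimodular weights.
  Cauchy-Schwarz over x in B1 removes the weights and leaves sum over y, y' in B2 of |F(y - y')|,
  where F(u) = sum over x in B1 of e_p(c u x). Cauchy-Schwarz over the pairs (y, y') bounds its square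
  by |B2|^2 times the sum of r(u) |F(u)|^2, r(u) counting the representations u = y - y', and a third
  Cauchy-Schwarz over u gives at most (sum r(u)^2)^(1/2) (sum |F(u)|^4)^(1/2) = (E(B2) p E(B1))^(1/2),
  the fourth moment of F being evaluated by orthogonality of characters. Altogether
  |S|^8 <= |B1|^4 |B2|^4 E(B1) E(B2) p.
\<close>

lemma ep_eq_cis: "ep p k = cis (2 * pi * of_int k / of_nat p)"
  unfolding ep_def cis_conv_exp by (simp add: field_simps)

lemma norm_ep [simp]: "norm (ep p k) = 1"
  by (simp add: ep_eq_cis)

lemma ep_add: "ep p (a + b) = ep p a * ep p b"
  by (simp add: ep_eq_cis cis_mult add_divide_distrib distrib_left)

lemma cnj_ep: "cnj (ep p a) = ep p (- a)"
  by (simp add: ep_eq_cis cis_cnj)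

lemma ep_diff: "ep p (a - b) = ep p a * cnj (ep p b)"
  using ep_add[of p a "- b"] by (simp add: cnj_ep)

lemma ep_multiple: "p > 0 \<Longrightarrow> ep p (int p * t) = 1"
  by (simp add: ep_eq_cis) (metis Ints_of_int cis_multiple_2pi mult.assoc)

lemma ep_mod: "p > 0 \<Longrightarrow> ep p (a mod int p) = ep p a"
  using ep_add[of p "a mod int p" "int p * (a div int p)"] ep_multiple[of p "a div int p"] by simp

lemma ep_cong: "p > 0 \<Longrightarrow> [a = b] (mod int p) \<Longrightarrow> ep p a = ep p b"
  by (metis cong_def ep_mod)

lemma dvd_of_ep_eq_1:
  assumes "p > 0" "ep p k = 1"
  shows "int p dvd k"
proof -
  obtain n :: int where "2 * pi * k / p = 2 * n * pi"
    using assms(2) unfolding ep_def by (auto simp: exp_eq_1)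
  then have "k = int p * n"
    using assms(1) by (simp add: field_simps) (metis of_int_eq_iff of_int_mult of_int_of_nat_eq)
  then show ?thesis by simp
qed

lemma ep_of_nat_mult: "ep p (int n * k) = ep p k ^ n"
proof (induction n)
  case (Suc n)
  then show ?case using ep_add[of p k "int n * k"] by (simp add: algebra_simps)
qed (simp add: ep_def)

lemma sum_ep_mult:
  assumes "p > 0"
  shows "(\<Sum>u\<in>{0..<int p}. ep p (u * k)) = (if int p dvd k then of_nat p else 0)"
proof -
  have "(\<Sum>u\<in>{0..<int p}. ep p (u * k)) = (\<Sum>n<p. ep p k ^ n)"
    using image_int_atLeastLessThan[of 0 p]
    by (simp add: atLeast0LessThan flip: ep_of_nat_mult)
      (metis (no_types, lifting) inj_on_of_nat sum.reindex_cong)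
  moreover have "ep p k = 1" if "int p dvd k"
    using that assms ep_multiple by auto
  moreover have "ep p k ^ p = 1"
    using assms ep_multiple[of p k] ep_of_nat_mult[of p p k] by simp
  ultimately show ?thesis
    using assms dvd_of_ep_eq_1[of p k] geometric_sum[of "ep p k" p] by auto
qed

lemma addE_eq_sum:
  assumes "finite B"
  shows "real (addE p B) = (\<Sum>b1\<in>B. \<Sum>b2\<in>B. \<Sum>b3\<in>B. \<Sum>b4\<in>B.
           of_bool ([b1 + b2 = b3 + b4] (mod int p)))"
proof -
  define P where "P = (\<lambda>(b1, b2, b3, b4). [b1 + b2 = b3 + b4] (mod int p))"
  have "real (addE p B) = real (card ((B \<times> B \<times> B \<times> B) \<inter> {t. P t}))"
    unfolding addE_def P_def by (rule arg_cong[where f = "\<lambda>S. real (card S)"]) auto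
  also have "\<dots> = (\<Sum>t\<in>B \<times> B \<times> B \<times> B. of_bool (P t))"
    using assms by (simp only: real_of_card sum.inter_restrict finite_cartesian_product) (simp add: of_bool_def)
  finally show ?thesis
    by (simp add: sum.cartesian_product P_def case_prod_unfold)
qed

definition diff_count :: "nat \<Rightarrow> int set \<Rightarrow> int \<Rightarrow> real" where
  "diff_count p B u = (\<Sum>x\<in>B. \<Sum>x'\<in>B. of_bool ([x - x' = u] (mod int p)))"

lemma sum_of_bool_cong_mult:
  fixes f :: "int \<Rightarrow> 'a::comm_semiring_1"
  assumes "p > 0"
  shows "(\<Sum>u\<in>{0..<int p}. of_bool ([a = u] (mod int p)) * f u) = f (a mod int p)"
proof -
  have "(\<Sum>u\<in>{0..<int p}. of_bool ([a = u] (mod int p)) * f u)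
      = (\<Sum>u\<in>{0..<int p}. if u = a mod int p then f u else 0)"
    by (intro sum.cong refl) (auto simp: cong_def)
  then show ?thesis using assms by simp
qed

lemma sum_diff_eq_sum_diff_count:
  assumes "p > 0" and periodic: "\<And>u. f (u mod int p) = f u"
  shows "(\<Sum>x\<in>B. \<Sum>x'\<in>B. f (x - x')) = (\<Sum>u\<in>{0..<int p}. diff_count p B u * f u)"
proof -
  have "(\<Sum>u\<in>{0..<int p}. diff_count p B u * f u)
      = (\<Sum>x\<in>B. \<Sum>x'\<in>B. \<Sum>u\<in>{0..<int p}. of_bool ([x - x' = u] (mod int p)) * f u)"
    by (simp add: diff_count_def sum_distrib_right sum.swap[where A = "{0..<int p}"])
  also have "\<dots> = (\<Sum>x\<in>B. \<Sum>x'\<in>B. f (x - x'))"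
    by (simp add: sum_of_bool_cong_mult[OF assms(1)] periodic)
  finally show ?thesis ..
qed

lemma sum_diff_count_square:
  assumes "p > 0" "finite B"
  shows "(\<Sum>u\<in>{0..<int p}. diff_count p B u ^ 2) = real (addE p B)"
proof -
  have periodic: "diff_count p B (u mod int p) = diff_count p B u" for u
    by (simp add: diff_count_def cong_def)
  have "(\<Sum>u\<in>{0..<int p}. diff_count p B u ^ 2) = (\<Sum>x1\<in>B. \<Sum>x2\<in>B. diff_count p B (x1 - x2))"
    by (simp add: power2_eq_square sum_diff_eq_sum_diff_count[where f = "diff_count p B", OF assms(1) periodic])
  also have "\<dots> = (\<Sum>x1\<in>B. \<Sum>x2\<in>B. \<Sum>x3\<in>B. \<Sum>x4\<in>B.
      of_bool ([x1 + x4 = x2 + x3] (mod int p)))"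
    unfolding diff_count_def
    by (intro sum.cong refl arg_cong[where f = of_bool]) (auto simp: cong_iff_dvd_diff algebra_simps)
  also have "\<dots> = (\<Sum>x1\<in>B. \<Sum>x2\<in>B. \<Sum>x4\<in>B. \<Sum>x3\<in>B.
      of_bool ([x1 + x4 = x2 + x3] (mod int p)))"
    by (rule sum.cong[OF refl], rule sum.cong[OF refl], rule sum.swap)
  also have "\<dots> = (\<Sum>x1\<in>B. \<Sum>x4\<in>B. \<Sum>x2\<in>B. \<Sum>x3\<in>B.
      of_bool ([x1 + x4 = x2 + x3] (mod int p)))"
    by (rule sum.cong[OF refl], rule sum.swap)
  also have "\<dots> = real (addE p B)"
    by (simp add: addE_eq_sum[OF assms(2)])
  finally show ?thesis .
qed

lemma norm_sum_power4:
  fixes f :: "'a \<Rightarrow> complex"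
  shows "complex_of_real (norm (\<Sum>x\<in>B. f x) ^ 4)
    = (\<Sum>x1\<in>B. \<Sum>x2\<in>B. \<Sum>x3\<in>B. \<Sum>x4\<in>B. f x1 * f x2 * cnj (f x3) * cnj (f x4))"
proof -
  have "complex_of_real (norm (\<Sum>x\<in>B. f x) ^ 4) = complex_of_real (norm (\<Sum>x\<in>B. f x) ^ 2) ^ 2"
    by simp
  also have "\<dots> = ((\<Sum>x\<in>B. f x) * (\<Sum>x\<in>B. f x)) * (cnj (\<Sum>x\<in>B. f x) * cnj (\<Sum>x\<in>B. f x))"
    by (simp only: complex_norm_square) (simp add: power2_eq_square mult_ac)
  also have "\<dots> = (\<Sum>x1\<in>B. \<Sum>x2\<in>B. f x1 * f x2) * (\<Sum>x3\<in>B. \<Sum>x4\<in>B. cnj (f x3) * cnj (f x4))"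
    by (simp add: sum_product cnj_sum)
  also have "\<dots> = (\<Sum>x1\<in>B. \<Sum>x2\<in>B. \<Sum>x3\<in>B. \<Sum>x4\<in>B. f x1 * f x2 * cnj (f x3) * cnj (f x4))"
    by (simp only: sum_distrib_right) (simp only: sum_distrib_left mult.assoc)
  finally show ?thesis .
qed

lemma sum_norm_ep_sum_power4:
  assumes "prime p" "\<not> int p dvd c" "finite B"
  shows "(\<Sum>u\<in>{0..<int p}. norm (\<Sum>x\<in>B. ep p (x * (c * u))) ^ 4) = real p * real (addE p B)"
proof -
  have p: "p > 0"
    using assms(1) prime_gt_0_nat by blast
  have dvd_iff_cong: "int p dvd c * (x1 + x2 - x3 - x4) \<longleftrightarrow> [x1 + x2 = x3 + x4] (mod int p)" for x1 x2 x3 x4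
  proof -
    have "prime (int p)"
      using assms(1) by simp
    then have "int p dvd c * (x1 + x2 - x3 - x4) \<longleftrightarrow> int p dvd (x1 + x2) - (x3 + x4)"
      using assms(2) by (simp add: prime_dvd_mult_iff diff_diff_eq)
    then show ?thesis by (simp add: cong_iff_dvd_diff)
  qed
  have "complex_of_real (\<Sum>u\<in>{0..<int p}. norm (\<Sum>x\<in>B. ep p (x * (c * u))) ^ 4)
      = (\<Sum>u\<in>{0..<int p}. \<Sum>x1\<in>B. \<Sum>x2\<in>B. \<Sum>x3\<in>B. \<Sum>x4\<in>B.
           ep p (u * (c * (x1 + x2 - x3 - x4))))"
    by (simp only: of_real_sum norm_sum_power4 flip: ep_add ep_diff) (simp add: algebra_simps)
  also have "\<dots> = (\<Sum>x1\<in>B. \<Sum>x2\<in>B. \<Sum>x3\<in>B. \<Sum>x4\<in>B.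
           \<Sum>u\<in>{0..<int p}. ep p (u * (c * (x1 + x2 - x3 - x4))))"
    by (simp only: sum.swap[where A = "{0..<int p}"])
  also have "\<dots> = complex_of_real (\<Sum>x1\<in>B. \<Sum>x2\<in>B. \<Sum>x3\<in>B. \<Sum>x4\<in>B.
           real p * of_bool ([x1 + x2 = x3 + x4] (mod int p)))"
    unfolding of_real_sum by (intro sum.cong refl) (simp add: sum_ep_mult[OF p] dvd_iff_cong)
  also have "\<dots> = complex_of_real (real p * real (addE p B))"
    by (simp add: addE_eq_sum[OF assms(3)] sum_distrib_left)
  finally show ?thesis
    by (simp only: of_real_eq_iff)
qed

lemma sum_norm_sum_square_le:
  fixes g :: "'b \<Rightarrow> complex" and h :: "'a \<Rightarrow> 'b \<Rightarrow> complex"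
  assumes "\<And>y. y \<in> Y \<Longrightarrow> norm (g y) \<le> 1"
  shows "(\<Sum>x\<in>X. norm (\<Sum>y\<in>Y. g y * h x y) ^ 2)
    \<le> (\<Sum>y\<in>Y. \<Sum>y'\<in>Y. norm (\<Sum>x\<in>X. h x y * cnj (h x y')))"
proof -
  define K where "K y y' = (\<Sum>x\<in>X. h x y * cnj (h x y'))" for y y'
  have "complex_of_real (\<Sum>x\<in>X. norm (\<Sum>y\<in>Y. g y * h x y) ^ 2)
      = (\<Sum>x\<in>X. \<Sum>y\<in>Y. \<Sum>y'\<in>Y. g y * cnj (g y') * (h x y * cnj (h x y')))"
    by (simp only: of_real_sum complex_norm_square) (simp add: cnj_sum sum_product mult_ac)
  also have "\<dots> = (\<Sum>y\<in>Y. \<Sum>y'\<in>Y. g y * cnj (g y') * K y y')"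
    by (simp add: K_def sum_distrib_left sum.swap[where A = X])
  finally have expand: "complex_of_real (\<Sum>x\<in>X. norm (\<Sum>y\<in>Y. g y * h x y) ^ 2)
      = (\<Sum>y\<in>Y. \<Sum>y'\<in>Y. g y * cnj (g y') * K y y')" .
  have "(\<Sum>x\<in>X. norm (\<Sum>y\<in>Y. g y * h x y) ^ 2)
      = norm (complex_of_real (\<Sum>x\<in>X. norm (\<Sum>y\<in>Y. g y * h x y) ^ 2))"
    by (simp only: norm_of_real abs_of_nonneg sum_nonneg zero_le_power2)
  also have "\<dots> \<le> (\<Sum>y\<in>Y. \<Sum>y'\<in>Y. norm (g y * cnj (g y') * K y y'))"
    unfolding expand by (rule order_trans[OF norm_sum sum_mono[OF norm_sum]])
  also have "\<dots> \<le> (\<Sum>y\<in>Y. \<Sum>y'\<in>Y. norm (K y y'))"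
    using assms by (auto simp: norm_mult intro!: sum_mono mult_le_one mult_left_le_one_le)
  finally show ?thesis
    unfolding K_def .
qed

lemma sum_sum_squared_le:
  fixes f :: "'a \<Rightarrow> 'b \<Rightarrow> real"
  shows "(\<Sum>y\<in>Y. \<Sum>z\<in>Z. f y z) ^ 2 \<le> real (card Y * card Z) * (\<Sum>y\<in>Y. \<Sum>z\<in>Z. f y z ^ 2)"
  using sum_squared_le_sum_of_squares[of "\<lambda>(y, z). f y z" "Y \<times> Z"]
  by (simp add: sum.cartesian_product card_cartesian_product case_prod_unfold mult.commute)

lemma powr_inverse_power_mult:
  fixes a :: real
  assumes "0 \<le> a" "m > 0"
  shows "(a powr (1 / real m)) ^ (m * k) = a ^ k"
proof (cases "a = 0")
  case False
  then have "(a powr (1 / real m)) ^ (m * k) = a powr real k"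
    using assms by (simp add: powr_power)
  then show ?thesis
    using assms False by (simp add: powr_realpow)
qed (use assms in \<open>simp add: power_0_left\<close>)

lemma le_powr_product_of_power8_le:
  fixes X n1 n2 E1 E2 P :: real
  assumes "0 \<le> X" "0 \<le> n1" "0 \<le> n2" "0 \<le> E1" "0 \<le> E2" "0 \<le> P"
    and "X ^ 8 \<le> n1 ^ 4 * E1 * n2 ^ 4 * E2 * P"
  shows "X \<le> n1 powr (1/2) * E1 powr (1/8) * n2 powr (1/2) * E2 powr (1/8) * P powr (1/8)"
proof (rule power_le_imp_le_base[where n = 7])
  have root2: "(a powr (1/2)) ^ 8 = a ^ 4" and root8: "(a powr (1/8)) ^ 8 = a" if "0 \<le> a" for a :: real
    using powr_inverse_power_mult[OF that, of 2 4] powr_inverse_power_mult[OF that, of 8 1] by simp_all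
  show "X ^ Suc 7 \<le> (n1 powr (1/2) * E1 powr (1/8) * n2 powr (1/2) * E2 powr (1/8) * P powr (1/8)) ^ Suc 7"
    using assms by (simp only: power_mult_distrib) (simp add: root2 root8)
qed simp

lemma norm_quadratic_sum_square_le:
  fixes \<theta> :: int and B1 B2 :: "int set"
  shows "norm (\<Sum>b1\<in>B1. \<Sum>b2\<in>B2. ep p (\<theta> * (b1 - b2)^2)) ^ 2
    \<le> real (card B1) * (\<Sum>y\<in>B2. \<Sum>y'\<in>B2. norm (\<Sum>x\<in>B1. ep p (x * (-2 * \<theta> * (y - y')))))"
proof -
  define G where "G x = (\<Sum>y\<in>B2. ep p (\<theta> * y^2) * ep p (x * (-2 * \<theta> * y)))" for x
  have "ep p (\<theta> * (x - y)^2) = ep p (\<theta> * x^2) * (ep p (\<theta> * y^2) * ep p (x * (-2 * \<theta> * y)))" for x y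
    unfolding ep_add[symmetric] by (simp add: power2_eq_square algebra_simps)
  then have "(\<Sum>b1\<in>B1. \<Sum>b2\<in>B2. ep p (\<theta> * (b1 - b2)^2)) = (\<Sum>x\<in>B1. ep p (\<theta> * x^2) * G x)"
    by (simp add: G_def sum_distrib_left ep_add)
  then have "norm (\<Sum>b1\<in>B1. \<Sum>b2\<in>B2. ep p (\<theta> * (b1 - b2)^2)) \<le> (\<Sum>x\<in>B1. norm (G x))"
    by (simp add: norm_mult order_trans[OF norm_sum])
  then have "norm (\<Sum>b1\<in>B1. \<Sum>b2\<in>B2. ep p (\<theta> * (b1 - b2)^2)) ^ 2 \<le> (\<Sum>x\<in>B1. norm (G x)) ^ 2"
    by (simp add: power_mono)
  also have "\<dots> \<le> real (card B1) * (\<Sum>x\<in>B1. norm (G x) ^ 2)"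
    using sum_squared_le_sum_of_squares by (simp add: mult.commute)
  also have "(\<Sum>x\<in>B1. norm (G x) ^ 2)
      \<le> (\<Sum>y\<in>B2. \<Sum>y'\<in>B2. norm (\<Sum>x\<in>B1. ep p (x * (-2 * \<theta> * (y - y')))))"
  proof -
    have "ep p (x * (-2 * \<theta> * y)) * cnj (ep p (x * (-2 * \<theta> * y'))) = ep p (x * (-2 * \<theta> * (y - y')))"
      for x y y'
      by (simp add: algebra_simps flip: ep_diff)
    then show ?thesis
      unfolding G_def
      using sum_norm_sum_square_le[where g = "\<lambda>y. ep p (\<theta> * y^2)" and h = "\<lambda>x y. ep p (x * (-2 * \<theta> * y))"]
      by simp
  qed
  finally show ?thesis
    by (simp add: mult_left_mono)
qed

lemma sum_sum_norm_ep_sum_diff_square_le: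
  assumes "prime p" "\<not> int p dvd c" "finite B1" "finite B2"
  shows "(\<Sum>y\<in>B2. \<Sum>y'\<in>B2. norm (\<Sum>x\<in>B1. ep p (x * (c * (y - y')))) ^ 2) ^ 2
    \<le> real (addE p B2) * (real p * real (addE p B1))"
proof -
  have "p > 0"
    using assms(1) prime_gt_0_nat by blast
  define F where "F u = (\<Sum>x\<in>B1. ep p (x * (c * u)))" for u
  have periodic: "norm (F (u mod int p)) ^ 2 = norm (F u) ^ 2" for u
    unfolding F_def
    by (intro arg_cong[where f = "\<lambda>z. norm z ^ 2"] sum.cong refl ep_cong[OF \<open>p > 0\<close>] cong_mult cong_refl)
      (simp add: cong_def)
  have "(\<Sum>y\<in>B2. \<Sum>y'\<in>B2. norm (F (y - y')) ^ 2) ^ 2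
      = (\<Sum>u\<in>{0..<int p}. diff_count p B2 u * norm (F u) ^ 2) ^ 2"
    using sum_diff_eq_sum_diff_count[where f = "\<lambda>u. norm (F u) ^ 2", OF \<open>p > 0\<close> periodic] by simp
  also have "\<dots> \<le> (\<Sum>u\<in>{0..<int p}. diff_count p B2 u ^ 2) * (\<Sum>u\<in>{0..<int p}. norm (F u) ^ 4)"
    using Cauchy_Schwarz_ineq_sum[of "diff_count p B2" "\<lambda>u. norm (F u) ^ 2"] by (simp flip: power_mult)
  also have "\<dots> = real (addE p B2) * (real p * real (addE p B1))"
    unfolding F_def
    using sum_diff_count_square[OF \<open>p > 0\<close> assms(4)] sum_norm_ep_sum_power4[OF assms(1-3)] by simp
  finally show ?thesis
    unfolding F_def .
qed

lemma quadratic_sum_bound_odd_prime: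
  fixes \<theta> :: int and B1 B2 :: "int set"
  assumes p: "prime p" "p \<noteq> 2" and "\<not> int p dvd \<theta>" and fin: "finite B1" "finite B2"
  shows "norm (\<Sum>b1\<in>B1. \<Sum>b2\<in>B2. ep p (\<theta> * (b1 - b2)^2))
         \<le> real (card B1) powr (1/2) * real (addE p B1) powr (1/8)
           * real (card B2) powr (1/2) * real (addE p B2) powr (1/8) * real p powr (1/8)"
proof -
  have c: "\<not> int p dvd -2 * \<theta>"
  proof
    assume "int p dvd -2 * \<theta>"
    then have "int p dvd 2 \<or> int p dvd \<theta>"
      using p(1) by (simp add: prime_dvd_mult_iff)
    then have "p dvd 2"
      using \<open>\<not> int p dvd \<theta>\<close> by presburger
    then show False
      using p two_is_prime_nat primes_dvd_imp_eq by blast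
  qed
  define W where "W = (\<Sum>y\<in>B2. \<Sum>y'\<in>B2. norm (\<Sum>x\<in>B1. ep p (x * (-2 * \<theta> * (y - y')))))"
  define V where "V = (\<Sum>y\<in>B2. \<Sum>y'\<in>B2. norm (\<Sum>x\<in>B1. ep p (x * (-2 * \<theta> * (y - y')))) ^ 2)"
  define n1 where "n1 = real (card B1)"
  define n2 where "n2 = real (card B2)"
  have nonneg: "0 \<le> n1" "0 \<le> W"
    by (simp_all add: n1_def W_def sum_nonneg)
  have "norm (\<Sum>b1\<in>B1. \<Sum>b2\<in>B2. ep p (\<theta> * (b1 - b2)^2)) ^ 8
      = (norm (\<Sum>b1\<in>B1. \<Sum>b2\<in>B2. ep p (\<theta> * (b1 - b2)^2)) ^ 2) ^ 4"
    by (simp flip: power_mult)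
  also have "\<dots> \<le> (n1 * W) ^ 4"
    unfolding n1_def W_def by (intro power_mono norm_quadratic_sum_square_le) simp
  also have "\<dots> = n1 ^ 4 * (W ^ 2) ^ 2"
    by (simp flip: power_mult add: power_mult_distrib)
  also have "\<dots> \<le> n1 ^ 4 * (n2 ^ 2 * V) ^ 2"
    using sum_sum_squared_le nonneg
    by (intro mult_left_mono power_mono) (simp_all add: W_def V_def n2_def power2_eq_square)
  also have "\<dots> = n1 ^ 4 * n2 ^ 4 * V ^ 2"
    by (simp flip: power_mult add: power_mult_distrib)
  also have "\<dots> \<le> n1 ^ 4 * n2 ^ 4 * (real (addE p B2) * (real p * real (addE p B1)))"
    unfolding V_def using sum_sum_norm_ep_sum_diff_square_le[OF p(1) c fin] nonneg
    by (intro mult_left_mono) auto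
  finally show ?thesis
    unfolding n1_def n2_def by (intro le_powr_product_of_power8_le) (simp_all add: mult_ac)
qed

lemma addE_singleton: "addE p {b} = 1"
proof -
  have "{(b1, b2, b3, b4). b1 \<in> {b} \<and> b2 \<in> {b} \<and> b3 \<in> {b} \<and> b4 \<in> {b} \<and> [b1 + b2 = b3 + b4] (mod int p)}
      = {(b, b, b, b)}"
    by auto
  then show ?thesis
    by (simp add: addE_def)
qed

lemma norm_sum_ep_two_le:
  assumes "B \<subseteq> {0..<2}"
  shows "norm (\<Sum>b\<in>B. ep 2 b) \<le> real (card B) powr (1/2) * real (addE 2 B) powr (1/8)"
proof -
  have "B = {} \<or> B = {0} \<or> B = {1} \<or> B = {0, 1}"
    using assms by (subgoal_tac "B \<subseteq> {0, 1}") auto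
  moreover have "ep 2 1 = -1"
    by (simp add: ep_eq_cis)
  ultimately show ?thesis
    by (auto simp: ep_def addE_singleton)
qed

text \<open>For p = 2 the cross term c x y vanishes identically, but then the phase is e_2(b1 - b2) and
  the sum factorises.\<close>

lemma quadratic_sum_bound_two:
  fixes \<theta> :: int and B1 B2 :: "int set"
  assumes "\<not> int 2 dvd \<theta>" "B1 \<subseteq> {0..<2}" "B2 \<subseteq> {0..<2}"
  shows "norm (\<Sum>b1\<in>B1. \<Sum>b2\<in>B2. ep 2 (\<theta> * (b1 - b2)^2))
         \<le> real (card B1) powr (1/2) * real (addE 2 B1) powr (1/8)
           * real (card B2) powr (1/2) * real (addE 2 B2) powr (1/8) * real 2 powr (1/8)"
proof -
  have "[\<theta> * k^2 = k] (mod int 2)" for k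
    using assms(1) by (simp add: cong_iff_dvd_diff even_mult_iff power2_eq_square)
  then have "ep 2 (\<theta> * (b1 - b2)^2) = ep 2 b1 * cnj (ep 2 b2)" for b1 b2
    using ep_cong by (simp flip: ep_diff)
  then have "(\<Sum>b1\<in>B1. \<Sum>b2\<in>B2. ep 2 (\<theta> * (b1 - b2)^2)) = (\<Sum>b\<in>B1. ep 2 b) * cnj (\<Sum>b\<in>B2. ep 2 b)"
    by (simp add: sum_product cnj_sum)
  then have "norm (\<Sum>b1\<in>B1. \<Sum>b2\<in>B2. ep 2 (\<theta> * (b1 - b2)^2))
      = norm (\<Sum>b\<in>B1. ep 2 b) * norm (\<Sum>b\<in>B2. ep 2 b)"
    by (simp only: norm_mult complex_mod_cnj)
  also have "\<dots> \<le> real (card B1) powr (1/2) * real (addE 2 B1) powr (1/8)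
           * (real (card B2) powr (1/2) * real (addE 2 B2) powr (1/8))"
    using assms(2,3) by (intro mult_mono norm_sum_ep_two_le) auto
  also have "\<dots> \<le> \<dots> * real 2 powr (1/8)"
    using ge_one_powr_ge_zero[of 2 "1/8"] by (auto simp: mult_le_cancel_left1 not_less intro!: mult_nonneg_nonneg)
  finally show ?thesis
    by (simp add: mult_ac)
qed

theorem lemma9:
  fixes p :: nat and \<theta> :: int and B1 B2 :: "int set"
  assumes "prime p"
    and "\<not> int p dvd \<theta>"
    and "B1 \<subseteq> {0..<int p}" and "B2 \<subseteq> {0..<int p}"
  shows "norm (\<Sum>b1\<in>B1. \<Sum>b2\<in>B2. ep p (\<theta> * (b1 - b2)^2))
         \<le> real (card B1) powr (1/2) * real (addE p B1) powr (1/8)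
           * real (card B2) powr (1/2) * real (addE p B2) powr (1/8) * real p powr (1/8)"
proof (cases "p = 2")
  case True
  then show ?thesis
    using quadratic_sum_bound_two assms(2-4) by simp
next
  case False
  moreover have "finite B1" "finite B2"
    using assms(3,4) finite_subset by blast+
  ultimately show ?thesis
    using quadratic_sum_bound_odd_prime assms(1,2) by blast
qed

end
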